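(* Let $\Omega,\Omega^*$ be compact metric spaces and $c\in C(\Omega\times\Omega^* )$. Let $\mu_1,\mu_2$ be Borel probability measures on $\Omega$, $\nu$ a Borel probability measure on $\Omega^*$, and $\phi_i\in\Phi_c(\mu_i,\nu)$ for $i=1,2$. Suppose that at least one of the $\phi_i$ is unique up to an additive constant, i.e. $\Phi_c(\mu_i,\nu)=\{\phi_i+C: C\in\mathbb R\}$ for $i=1$ or $i=2$. Consider a Borel set $U\subset\Omega$ with $U\neq\Omega$ such that $\mu_1\leq\mu_2$ on $U$ and $\phi_1\leq\phi_2$ on $\Omega\setminus U$. Then $\phi_1\leq\phi_2$ on $\Omega$.
   Context: For $\phi\in C(\Omega)$, $\phi^c(y)=\sup_{x\in\Omega}\phi(x)-c(x,y)$. $\mathcal T_c(\mu,\nu)=\inf_{\pi\in\Pi(\mu,\nu)}\int c\,d\pi$ over couplings $\pi$ of $\mu$ and $\nu$; by duality $\mathcal T_c(\mu,\nu)=\max_{\phi\in C(\Omega)}\int\phi\,d\mu-\int\phi^c\,d\nu$. $\Phi_c(\mu,\nu)=\{\phi\in C(\Omega):\int_\Omega\phi\,d\mu-\int_{\Omega^*}\phi^c\,d\nu=\mathcal T_c(\mu,\nu)\}$. "$\mu_1\leq\mu_2$ on $U$" means $\mu_1(A)\leq\mu_2(A)$ for all Borel $A\subset U$. *)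

theory Defs
  imports "HOL-Probability.Probability"
begin

text \<open>Compact metric spaces are modelled as types \<open>'a\<close>, \<open>'b\<close> of class metric_space
  with compact UNIV.  Borel probability measures are measures \<open>M\<close> with
  \<open>sets M = sets borel\<close> and \<open>prob_space M\<close>.\<close>

definition c_transform :: "('a \<times> 'b \<Rightarrow> real) \<Rightarrow> ('a \<Rightarrow> real) \<Rightarrow> 'b \<Rightarrow> real" where
  "c_transform c \<phi> y = (SUP x. \<phi> x - c (x, y))"

definition couplings :: "'a::topological_space measure \<Rightarrow> 'b::topological_space measure \<Rightarrow> ('a \<times> 'b) measure set" where
  "couplings \<mu> \<nu> = {\<pi>. sets \<pi> = sets borel \<and> distr \<pi> borel fst = \<mu> \<and> distr \<pi> borel snd = \<nu>}"

definition ot_cost :: "('a::topological_space \<times> 'b::topological_space \<Rightarrow> real) \<Rightarrow> 'a measure \<Rightarrow> 'b measure \<Rightarrow> real" where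
  "ot_cost c \<mu> \<nu> = Inf {integral\<^sup>L \<pi> c | \<pi>. \<pi> \<in> couplings \<mu> \<nu>}"

definition kantorovich_potentials ::
  "('a::topological_space \<times> 'b::topological_space \<Rightarrow> real) \<Rightarrow> 'a measure \<Rightarrow> 'b measure \<Rightarrow> ('a \<Rightarrow> real) set" where
  "kantorovich_potentials c \<mu> \<nu> =
     {\<phi>. continuous_on UNIV \<phi> \<and>
          integral\<^sup>L \<mu> \<phi> - integral\<^sup>L \<nu> (c_transform c \<phi>) = ot_cost c \<mu> \<nu>}"

definition measure_le_on :: "'a measure \<Rightarrow> 'a measure \<Rightarrow> 'a set \<Rightarrow> bool" where
  "measure_le_on \<mu>1 \<mu>2 U \<longleftrightarrow> (\<forall>A \<in> sets \<mu>1. A \<subseteq> U \<longrightarrow> emeasure \<mu>1 A \<le> emeasure \<mu>2 A)"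

end

theory Submission
  imports Defs
begin

text \<open>
  Let \<open>J\<^sub>i(\<phi>) = \<integral>\<phi> d\<mu>\<^sub>i - \<integral>\<phi>\<^sup>c d\<nu>\<close> be the dual functional, so that
  \<open>J\<^sub>i \<le> T\<^sub>c(\<mu>\<^sub>i, \<nu>)\<close> (weak duality) with equality exactly at the Kantorovich potentials.
  Since \<open>\<phi>\<^sub>1 - min \<phi>\<^sub>1 \<phi>\<^sub>2 = max \<phi>\<^sub>1 \<phi>\<^sub>2 - \<phi>\<^sub>2 = (\<phi>\<^sub>1 - \<phi>\<^sub>2)\<^sup>+\<close> vanishes
  outside \<open>U\<close>, where \<open>\<mu>\<^sub>1 \<le> \<mu>\<^sub>2\<close>, and since
  \<open>(min \<phi>\<^sub>1 \<phi>\<^sub>2)\<^sup>c + (max \<phi>\<^sub>1 \<phi>\<^sub>2)\<^sup>c \<le> \<phi>\<^sub>1\<^sup>c + \<phi>\<^sub>2\<^sup>c\<close> pointwise, we get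
  \<open>J\<^sub>1(min \<phi>\<^sub>1 \<phi>\<^sub>2) + J\<^sub>2(max \<phi>\<^sub>1 \<phi>\<^sub>2) \<ge> J\<^sub>1(\<phi>\<^sub>1) + J\<^sub>2(\<phi>\<^sub>2) = T\<^sub>c(\<mu>\<^sub>1, \<nu>) + T\<^sub>c(\<mu>\<^sub>2, \<nu>)\<close>.
  By weak duality, \<open>min \<phi>\<^sub>1 \<phi>\<^sub>2\<close> and \<open>max \<phi>\<^sub>1 \<phi>\<^sub>2\<close> are again potentials for
  \<open>(\<mu>\<^sub>1, \<nu>)\<close> and \<open>(\<mu>\<^sub>2, \<nu>)\<close>. If, say, the potential of \<open>(\<mu>\<^sub>1, \<nu>)\<close> is unique up to
  constants, then \<open>min \<phi>\<^sub>1 \<phi>\<^sub>2 = \<phi>\<^sub>1 + C\<close>; evaluating at a point outside \<open>U\<close> gives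
  \<open>C = 0\<close>, i.e. \<open>\<phi>\<^sub>1 \<le> \<phi>\<^sub>2\<close>.
\<close>

lemma compact_metric_countable_basis:
  assumes "compact (UNIV :: 'a::metric_space set)"
  obtains B :: "'a::metric_space set set" where "countable B" "topological_basis B"
proof -
  have "\<exists>k. finite k \<and> (UNIV :: 'a set) \<subseteq> (\<Union>x\<in>k. ball x (inverse (Suc n)))" for n :: nat
    by (rule compactE_image[OF assms, of UNIV "\<lambda>x. ball x (inverse (Suc n))"]) auto
  then obtain F where F: "\<And>n. finite (F n)" "\<And>n. (UNIV :: 'a set) \<subseteq> (\<Union>x\<in>F n. ball x (inverse (Suc n)))"
    by metis
  define B where "B = (\<Union>n. (\<lambda>x. ball x (inverse (Suc n))) ` F n)"
  have "countable B"
    unfolding B_def using F(1) by (intro countable_UN) (auto intro: countable_finite)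
  moreover have "topological_basis B"
  proof (rule topological_basisI)
    fix O' and x :: 'a assume "open O'" "x \<in> O'"
    then obtain e where e: "e > 0" "ball x e \<subseteq> O'" by (meson open_contains_ball)
    obtain n :: nat where n: "inverse (Suc n) < e / 2"
      using e(1) reals_Archimedean[of "e / 2"] by auto
    obtain z where z: "z \<in> F n" "x \<in> ball z (inverse (Suc n))" using F(2)[of n] by blast
    have "ball z (inverse (Suc n)) \<subseteq> ball x e"
      using z n by (auto simp: dist_commute intro!: dist_triangle_lt[where z = z])
    then show "\<exists>B'\<in>B. x \<in> B' \<and> B' \<subseteq> O'" using z e unfolding B_def by blast
  qed (auto simp: B_def)
  ultimately show ?thesis using that by blast
qed

lemma sets_pair_borel_eq_borel:
  fixes Ba :: "'a::topological_space set set" and Bb :: "'b::topological_space set set"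
  assumes "countable Ba" "topological_basis Ba" "countable Bb" "topological_basis Bb"
  shows "sets (borel \<Otimes>\<^sub>M borel) = sets (borel :: ('a \<times> 'b) measure)"
proof
  show "sets (borel \<Otimes>\<^sub>M borel) \<subseteq> sets (borel :: ('a \<times> 'b) measure)"
    by (rule sets_pair_in_sets) (rule borel_Times)
next
  let ?B = "(\<lambda>(a, b). a \<times> b) ` (Ba \<times> Bb)"
  have "countable ?B" "topological_basis ?B"
    using assms by (auto intro: topological_basis_prod)
  have "S \<in> sets (borel \<Otimes>\<^sub>M borel)" if "open S" for S :: "('a \<times> 'b) set"
  proof -
    obtain K where "K \<subseteq> ?B" "\<Union>K = S"
      using \<open>topological_basis ?B\<close> \<open>open S\<close> by (auto simp: topological_basis_def)
    moreover have "?B \<subseteq> sets (borel \<Otimes>\<^sub>M borel)"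
      using assms(2,4) by (auto simp: topological_basis_def)
    ultimately show ?thesis
      using countable_subset[OF _ \<open>countable ?B\<close>] sets.countable_Union[of K] by blast
  qed
  then show "sets (borel :: ('a \<times> 'b) measure) \<subseteq> sets (borel \<Otimes>\<^sub>M borel)"
    unfolding sets_borel[where 'a = "'a \<times> 'b"]
    by (intro sets.sigma_sets_subset') (auto simp: space_pair_measure)
qed

lemma sets_pair_borel_compact_metric:
  assumes "compact (UNIV :: 'a::metric_space set)" "compact (UNIV :: 'b::metric_space set)"
  shows "sets (borel \<Otimes>\<^sub>M borel) = sets (borel :: ('a \<times> 'b) measure)"
proof -
  obtain Ba :: "'a set set" where "countable Ba" "topological_basis Ba"
    using compact_metric_countable_basis[OF assms(1)] .
  moreover obtain Bb :: "'b set set" where "countable Bb" "topological_basis Bb"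
    using compact_metric_countable_basis[OF assms(2)] .
  ultimately show ?thesis by (rule sets_pair_borel_eq_borel)
qed

lemma integrable_continuous_compact:
  fixes f :: "'a::topological_space \<Rightarrow> real"
  assumes "compact (UNIV :: 'a set)" "finite_measure M" "sets M = sets borel"
    and "continuous_on UNIV f"
  shows "integrable M f"
proof -
  interpret finite_measure M by fact
  obtain B where "\<And>x. \<bar>f x\<bar> \<le> B"
    using compact_imp_bounded[OF compact_continuous_image[OF assms(4,1)]] by (auto simp: bounded_real)
  moreover have "f \<in> borel_measurable M"
    using borel_measurable_continuous_onI[OF assms(4)] measurable_cong_sets[OF assms(3) refl] by blast
  ultimately show ?thesis by (intro integrable_const_bound[where B = B]) auto
qed

lemma density_indicator_mono:
  assumes "measure_le_on \<mu>1 \<mu>2 U" "sets \<mu>1 = sets \<mu>2" "U \<in> sets \<mu>1"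
  shows "density \<mu>1 (indicator U) \<le> density \<mu>2 (indicator U)"
proof -
  have "emeasure (density \<mu>1 (indicator U)) X \<le> emeasure (density \<mu>2 (indicator U)) X" for X
  proof (cases "X \<in> sets \<mu>1")
    case True
    then show ?thesis
      using assms by (simp add: emeasure_restricted measure_le_on_def Int_lower1)
  qed (simp add: assms(2) emeasure_notin_sets)
  then show ?thesis
    using assms(2) sets_eq_imp_space_eq[OF assms(2)] by (simp add: le_measure_iff le_fun_def)
qed

lemma integral_mono_measure_le_on:
  fixes f :: "'a \<Rightarrow> real"
  assumes "measure_le_on \<mu>1 \<mu>2 U" "sets \<mu>1 = sets \<mu>2" "U \<in> sets \<mu>1"
    and "integrable \<mu>1 f" "integrable \<mu>2 f"
    and "\<And>x. 0 \<le> f x" "\<And>x. x \<notin> U \<Longrightarrow> f x = 0"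
  shows "integral\<^sup>L \<mu>1 f \<le> integral\<^sup>L \<mu>2 f"
proof -
  have restrict: "(\<integral>\<^sup>+x. f x \<partial>M) = (\<integral>\<^sup>+x. f x \<partial>density M (indicator U))"
    if "U \<in> sets M" "integrable M f" for M
  proof -
    have "(\<integral>\<^sup>+x. f x \<partial>density M (indicator U)) = (\<integral>\<^sup>+x. indicator U x * ennreal (f x) \<partial>M)"
      using that by (intro nn_integral_density) auto
    also have "\<dots> = (\<integral>\<^sup>+x. f x \<partial>M)"
      using assms(7) by (intro nn_integral_cong) (auto simp: indicator_def)
    finally show ?thesis ..
  qed
  have "(\<integral>\<^sup>+x. f x \<partial>\<mu>1) \<le> (\<integral>\<^sup>+x. f x \<partial>\<mu>2)"
    using restrict[of \<mu>1] restrict[of \<mu>2] assms(2-5)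
      nn_integral_mono_measure[OF _ density_indicator_mono[OF assms(1-3)]] by simp
  then show ?thesis
    using assms(4-6) by (simp add: nn_integral_eq_integral integral_nonneg)
qed

lemma pair_measure_in_couplings:
  fixes \<mu> :: "'a::topological_space measure" and \<nu> :: "'b::topological_space measure"
  assumes "sets (borel \<Otimes>\<^sub>M borel) = sets (borel :: ('a \<times> 'b) measure)"
    and "prob_space \<mu>" "sets \<mu> = sets borel" and "prob_space \<nu>" "sets \<nu> = sets borel"
  shows "\<mu> \<Otimes>\<^sub>M \<nu> \<in> couplings \<mu> \<nu>"
proof -
  interpret pair_prob_space \<mu> \<nu>
    using assms(2,4) by (simp add: pair_prob_space_def pair_sigma_finite_def prob_space_imp_sigma_finite)
  have "distr (\<mu> \<Otimes>\<^sub>M \<nu>) borel fst = distr (\<mu> \<Otimes>\<^sub>M \<nu>) \<mu> fst"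
    using assms(3) by (intro distr_cong) auto
  also have "\<dots> = \<mu>"
    by (rule M2.distr_pair_fst)
  finally have fst_marginal: "distr (\<mu> \<Otimes>\<^sub>M \<nu>) borel fst = \<mu>" .
  have "distr (\<mu> \<Otimes>\<^sub>M \<nu>) borel snd = distr (distr (\<nu> \<Otimes>\<^sub>M \<mu>) (\<mu> \<Otimes>\<^sub>M \<nu>) (\<lambda>(y, x). (x, y))) \<nu> snd"
    using assms(5) by (intro distr_cong distr_pair_swap) auto
  also have "\<dots> = distr (\<nu> \<Otimes>\<^sub>M \<mu>) \<nu> fst"
    by (subst distr_distr) (auto intro!: distr_cong)
  also have "\<dots> = \<nu>"
    by (rule M1.distr_pair_fst)
  finally show ?thesis
    using fst_marginal assms(1,3,5) by (simp add: couplings_def)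
qed

definition dual_value ::
  "('a \<times> 'b \<Rightarrow> real) \<Rightarrow> 'a measure \<Rightarrow> 'b measure \<Rightarrow> ('a \<Rightarrow> real) \<Rightarrow> real" where
  "dual_value c \<mu> \<nu> \<phi> = integral\<^sup>L \<mu> \<phi> - integral\<^sup>L \<nu> (c_transform c \<phi>)"

lemma kantorovich_potentials_iff:
  "\<phi> \<in> kantorovich_potentials c \<mu> \<nu> \<longleftrightarrow>
    continuous_on UNIV \<phi> \<and> dual_value c \<mu> \<nu> \<phi> = ot_cost c \<mu> \<nu>"
  by (simp add: kantorovich_potentials_def dual_value_def)

locale compact_cost =
  fixes c :: "'a::metric_space \<times> 'b::metric_space \<Rightarrow> real"
  assumes compact_source: "compact (UNIV :: 'a set)"
    and compact_target: "compact (UNIV :: 'b set)"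
    and continuous_cost: "continuous_on UNIV c"
begin

lemma compact_product: "compact (UNIV :: ('a \<times> 'b) set)"
  using compact_Times[OF compact_source compact_target] by simp

lemma bdd_above_c_transform:
  assumes "continuous_on UNIV \<phi>"
  shows "bdd_above (range (\<lambda>x. \<phi> x - c (x, y)))"
proof -
  have "continuous_on UNIV (\<lambda>x. \<phi> x - c (x, y))"
    by (intro continuous_intros assms continuous_on_compose2[OF continuous_cost]) auto
  then show ?thesis
    by (intro bounded_imp_bdd_above compact_imp_bounded compact_continuous_image compact_source)
qed

lemma c_transform_upper:
  assumes "continuous_on UNIV \<phi>"
  shows "\<phi> x - c (x, y) \<le> c_transform c \<phi> y"
  unfolding c_transform_def by (rule cSUP_upper[OF _ bdd_above_c_transform[OF assms]]) simp

lemma c_transform_least: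
  "(\<And>x. \<phi> x - c (x, y) \<le> t) \<Longrightarrow> c_transform c \<phi> y \<le> t"
  unfolding c_transform_def by (rule cSUP_least) auto

lemma c_transform_le_shift:
  assumes "continuous_on UNIV \<phi>" "\<And>x. c (x, y') \<le> c (x, y) + e"
  shows "c_transform c \<phi> y \<le> c_transform c \<phi> y' + e"
proof (rule c_transform_least)
  fix x show "\<phi> x - c (x, y) \<le> c_transform c \<phi> y' + e"
    using c_transform_upper[OF assms(1), of x y'] assms(2)[of x] by linarith
qed

lemma continuous_on_c_transform:
  assumes "continuous_on UNIV \<phi>"
  shows "continuous_on UNIV (c_transform c \<phi>)"
  unfolding continuous_on_iff
proof (intro ballI allI impI)
  fix y :: 'b and e :: real assume "e > 0"
  obtain d where "d > 0" and d: "\<And>p q. dist p q < d \<Longrightarrow> dist (c p) (c q) < e / 2"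
    using compact_uniformly_continuous[OF continuous_cost compact_product] \<open>e > 0\<close>
    unfolding uniformly_continuous_on_def by (meson UNIV_I half_gt_zero)
  have "dist (c_transform c \<phi> y') (c_transform c \<phi> y) < e" if "dist y' y < d" for y'
  proof -
    have "\<bar>c (x, y') - c (x, y)\<bar> < e / 2" for x
      using d[of "(x, y')" "(x, y)"] that by (simp add: dist_Pair_Pair dist_real_def)
    then have "c_transform c \<phi> y \<le> c_transform c \<phi> y' + e / 2"
      and "c_transform c \<phi> y' \<le> c_transform c \<phi> y + e / 2"
      by (intro c_transform_le_shift[OF assms]; smt (verit))+
    then show ?thesis
      using \<open>e > 0\<close> by (simp add: dist_real_def)
  qed
  then show "\<exists>d>0. \<forall>y'\<in>UNIV. dist y' y < d \<longrightarrow> dist (c_transform c \<phi> y') (c_transform c \<phi> y) < e"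
    using \<open>d > 0\<close> by blast
qed

lemma dual_value_le_coupling_cost:
  assumes "continuous_on UNIV \<phi>" "prob_space \<mu>" "\<pi> \<in> couplings \<mu> \<nu>"
  shows "dual_value c \<mu> \<nu> \<phi> \<le> integral\<^sup>L \<pi> c"
proof -
  have sets_\<pi>: "sets \<pi> = sets borel" and marginals: "distr \<pi> borel fst = \<mu>" "distr \<pi> borel snd = \<nu>"
    using assms(3) by (auto simp: couplings_def)
  have fst_measurable: "fst \<in> measurable \<pi> (borel :: 'a measure)"
    and snd_measurable: "snd \<in> measurable \<pi> (borel :: 'b measure)"
    unfolding measurable_cong_sets[OF sets_\<pi> refl]
    by (auto intro!: borel_measurable_continuous_onI continuous_intros)
  have "emeasure \<pi> (space \<pi>) = emeasure \<mu> (space \<mu>)"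
    using fst_measurable by (simp flip: marginals(1) add: emeasure_distr)
  then interpret prob_space \<pi>
    using prob_space.emeasure_space_1[OF assms(2)] by (intro prob_spaceI) simp
  have transform_continuous: "continuous_on UNIV (c_transform c \<phi>)"
    by (rule continuous_on_c_transform[OF assms(1)])
  have integrable_\<pi>: "integrable \<pi> g" if "continuous_on UNIV g" for g :: "'a \<times> 'b \<Rightarrow> real"
    by (rule integrable_continuous_compact[OF compact_product finite_measure_axioms sets_\<pi> that])
  have integrable_fst: "integrable \<pi> (\<lambda>p. \<phi> (fst p))"
    and integrable_snd: "integrable \<pi> (\<lambda>p. c_transform c \<phi> (snd p))"
    by (intro integrable_\<pi> continuous_on_compose2[OF assms(1)]
        continuous_on_compose2[OF transform_continuous] continuous_intros; simp)+
  have "dual_value c \<mu> \<nu> \<phi>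
      = integral\<^sup>L \<pi> (\<lambda>p. \<phi> (fst p)) - integral\<^sup>L \<pi> (\<lambda>p. c_transform c \<phi> (snd p))"
    using integral_distr[OF fst_measurable borel_measurable_continuous_onI[OF assms(1)]]
      integral_distr[OF snd_measurable borel_measurable_continuous_onI[OF transform_continuous]]
    by (simp add: dual_value_def marginals)
  also have "\<dots> = integral\<^sup>L \<pi> (\<lambda>p. \<phi> (fst p) - c_transform c \<phi> (snd p))"
    using integrable_fst integrable_snd by simp
  also have "\<dots> \<le> integral\<^sup>L \<pi> c"
  proof (rule integral_mono)
    show "integrable \<pi> (\<lambda>p. \<phi> (fst p) - c_transform c \<phi> (snd p))"
      using integrable_fst integrable_snd by simp
    show "integrable \<pi> c"
      by (rule integrable_\<pi>[OF continuous_cost])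
    show "\<phi> (fst p) - c_transform c \<phi> (snd p) \<le> c p" for p
      using c_transform_upper[OF assms(1), of "fst p" "snd p"] by simp
  qed
  finally show ?thesis .
qed

lemma dual_value_le_ot_cost:
  assumes "continuous_on UNIV \<phi>"
    and "prob_space \<mu>" "sets \<mu> = sets borel" "prob_space \<nu>" "sets \<nu> = sets borel"
  shows "dual_value c \<mu> \<nu> \<phi> \<le> ot_cost c \<mu> \<nu>"
  unfolding ot_cost_def
proof (rule cInf_greatest)
  show "{integral\<^sup>L \<pi> c |\<pi>. \<pi> \<in> couplings \<mu> \<nu>} \<noteq> {}"
    using pair_measure_in_couplings[OF sets_pair_borel_compact_metric[OF compact_source compact_target]
        assms(2-5)] by blast
qed (use dual_value_le_coupling_cost[OF assms(1,2)] in blast)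

lemma c_transform_min_add_max_le:
  assumes "continuous_on UNIV \<phi>1" "continuous_on UNIV \<phi>2"
  shows "c_transform c (\<lambda>x. min (\<phi>1 x) (\<phi>2 x)) y + c_transform c (\<lambda>x. max (\<phi>1 x) (\<phi>2 x)) y
    \<le> c_transform c \<phi>1 y + c_transform c \<phi>2 y"
proof -
  note upper1 = c_transform_upper[OF assms(1), of _ y] and upper2 = c_transform_upper[OF assms(2), of _ y]
  have "c_transform c (\<lambda>x. min (\<phi>1 x) (\<phi>2 x)) y \<le> min (c_transform c \<phi>1 y) (c_transform c \<phi>2 y)"
    by (rule c_transform_least) (smt (verit) upper1 upper2)
  moreover have "c_transform c (\<lambda>x. max (\<phi>1 x) (\<phi>2 x)) y \<le> max (c_transform c \<phi>1 y) (c_transform c \<phi>2 y)"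
    by (rule c_transform_least) (smt (verit) upper1 upper2)
  ultimately show ?thesis by linarith
qed

lemma dual_value_min_add_max_ge:
  assumes \<mu>1: "prob_space \<mu>1" "sets \<mu>1 = sets borel"
    and \<mu>2: "prob_space \<mu>2" "sets \<mu>2 = sets borel"
    and \<nu>: "prob_space \<nu>" "sets \<nu> = sets borel"
    and cont: "continuous_on UNIV \<phi>1" "continuous_on UNIV \<phi>2"
    and U: "U \<in> sets borel" "measure_le_on \<mu>1 \<mu>2 U"
    and le_outside: "\<And>x. x \<notin> U \<Longrightarrow> \<phi>1 x \<le> \<phi>2 x"
  shows "dual_value c \<mu>1 \<nu> \<phi>1 + dual_value c \<mu>2 \<nu> \<phi>2
    \<le> dual_value c \<mu>1 \<nu> (\<lambda>x. min (\<phi>1 x) (\<phi>2 x)) + dual_value c \<mu>2 \<nu> (\<lambda>x. max (\<phi>1 x) (\<phi>2 x))"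
proof -
  define f where "f x = max 0 (\<phi>1 x - \<phi>2 x)" for x
  have cont_f: "continuous_on UNIV f"
    unfolding f_def using cont by (intro continuous_intros)
  have integrable: "integrable M g" if "prob_space M" "sets M = sets borel" "continuous_on UNIV g"
    for M :: "'a measure" and g :: "'a \<Rightarrow> real"
    by (rule integrable_continuous_compact[OF compact_source prob_space.finite_measure[OF that(1)] that(2,3)])
  have integrable_\<nu>: "integrable \<nu> (c_transform c g)" if "continuous_on UNIV g" for g
    by (intro integrable_continuous_compact[OF compact_target prob_space.finite_measure[OF \<nu>(1)] \<nu>(2)]
        continuous_on_c_transform that)
  have "integral\<^sup>L \<mu>1 f \<le> integral\<^sup>L \<mu>2 f"
    using \<mu>1 \<mu>2 U le_outside cont_f
    by (intro integral_mono_measure_le_on[of _ _ U] integrable) (auto simp: f_def)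
  moreover have "integral\<^sup>L \<mu>1 (\<lambda>x. min (\<phi>1 x) (\<phi>2 x)) = integral\<^sup>L \<mu>1 \<phi>1 - integral\<^sup>L \<mu>1 f"
    and "integral\<^sup>L \<mu>2 (\<lambda>x. max (\<phi>1 x) (\<phi>2 x)) = integral\<^sup>L \<mu>2 \<phi>2 + integral\<^sup>L \<mu>2 f"
  proof -
    have "(\<lambda>x. min (\<phi>1 x) (\<phi>2 x)) = (\<lambda>x. \<phi>1 x - f x)"
      and "(\<lambda>x. max (\<phi>1 x) (\<phi>2 x)) = (\<lambda>x. \<phi>2 x + f x)"
      by (auto simp: f_def fun_eq_iff)
    then show "integral\<^sup>L \<mu>1 (\<lambda>x. min (\<phi>1 x) (\<phi>2 x)) = integral\<^sup>L \<mu>1 \<phi>1 - integral\<^sup>L \<mu>1 f"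
      and "integral\<^sup>L \<mu>2 (\<lambda>x. max (\<phi>1 x) (\<phi>2 x)) = integral\<^sup>L \<mu>2 \<phi>2 + integral\<^sup>L \<mu>2 f"
      using integrable[OF \<mu>1] integrable[OF \<mu>2] cont cont_f by simp_all
  qed
  moreover have "integral\<^sup>L \<nu> (\<lambda>y. c_transform c (\<lambda>x. min (\<phi>1 x) (\<phi>2 x)) y
        + c_transform c (\<lambda>x. max (\<phi>1 x) (\<phi>2 x)) y)
      \<le> integral\<^sup>L \<nu> (\<lambda>y. c_transform c \<phi>1 y + c_transform c \<phi>2 y)"
    using cont
    by (intro integral_mono c_transform_min_add_max_le Bochner_Integration.integrable_add
        integrable_\<nu> continuous_intros)
  ultimately show ?thesis
    using integrable_\<nu> cont by (simp add: dual_value_def continuous_intros)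
qed

lemma kantorovich_potentials_min_max:
  assumes \<mu>1: "prob_space \<mu>1" "sets \<mu>1 = sets borel"
    and \<mu>2: "prob_space \<mu>2" "sets \<mu>2 = sets borel"
    and \<nu>: "prob_space \<nu>" "sets \<nu> = sets borel"
    and \<phi>1: "\<phi>1 \<in> kantorovich_potentials c \<mu>1 \<nu>"
    and \<phi>2: "\<phi>2 \<in> kantorovich_potentials c \<mu>2 \<nu>"
    and U: "U \<in> sets borel" "measure_le_on \<mu>1 \<mu>2 U"
    and le_outside: "\<And>x. x \<notin> U \<Longrightarrow> \<phi>1 x \<le> \<phi>2 x"
  shows "(\<lambda>x. min (\<phi>1 x) (\<phi>2 x)) \<in> kantorovich_potentials c \<mu>1 \<nu>"
    and "(\<lambda>x. max (\<phi>1 x) (\<phi>2 x)) \<in> kantorovich_potentials c \<mu>2 \<nu>"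
proof -
  have cont: "continuous_on UNIV \<phi>1" "continuous_on UNIV \<phi>2"
    and optimal: "dual_value c \<mu>1 \<nu> \<phi>1 = ot_cost c \<mu>1 \<nu>" "dual_value c \<mu>2 \<nu> \<phi>2 = ot_cost c \<mu>2 \<nu>"
    using \<phi>1 \<phi>2 by (auto simp: kantorovich_potentials_iff)
  then have cont_min: "continuous_on UNIV (\<lambda>x. min (\<phi>1 x) (\<phi>2 x))"
    and cont_max: "continuous_on UNIV (\<lambda>x. max (\<phi>1 x) (\<phi>2 x))"
    by (auto intro!: continuous_intros)
  have "dual_value c \<mu>1 \<nu> (\<lambda>x. min (\<phi>1 x) (\<phi>2 x)) \<le> ot_cost c \<mu>1 \<nu>"
    and "dual_value c \<mu>2 \<nu> (\<lambda>x. max (\<phi>1 x) (\<phi>2 x)) \<le> ot_cost c \<mu>2 \<nu>"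
    using dual_value_le_ot_cost cont_min cont_max \<mu>1 \<mu>2 \<nu> by blast+
  with optimal dual_value_min_add_max_ge[OF \<mu>1 \<mu>2 \<nu> cont U le_outside]
  show "(\<lambda>x. min (\<phi>1 x) (\<phi>2 x)) \<in> kantorovich_potentials c \<mu>1 \<nu>"
    and "(\<lambda>x. max (\<phi>1 x) (\<phi>2 x)) \<in> kantorovich_potentials c \<mu>2 \<nu>"
    using cont_min cont_max by (auto simp: kantorovich_potentials_iff)
qed

end

theorem corollary3p3:
  fixes c :: "'a::metric_space \<times> 'b::metric_space \<Rightarrow> real"
    and \<mu>1 \<mu>2 :: "'a measure" and \<nu> :: "'b measure"
    and \<phi>1 \<phi>2 :: "'a \<Rightarrow> real" and U :: "'a set"
  assumes "compact (UNIV :: 'a set)" and "compact (UNIV :: 'b set)"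
    and "continuous_on UNIV c"
    and "prob_space \<mu>1" "sets \<mu>1 = sets borel"
    and "prob_space \<mu>2" "sets \<mu>2 = sets borel"
    and "prob_space \<nu>" "sets \<nu> = sets borel"
    and "\<phi>1 \<in> kantorovich_potentials c \<mu>1 \<nu>"
    and "\<phi>2 \<in> kantorovich_potentials c \<mu>2 \<nu>"
    and "kantorovich_potentials c \<mu>1 \<nu> = {(\<lambda>x. \<phi>1 x + C) | C. True}
       \<or> kantorovich_potentials c \<mu>2 \<nu> = {(\<lambda>x. \<phi>2 x + C) | C. True}"
    and "U \<in> sets borel" and "U \<noteq> UNIV"
    and "measure_le_on \<mu>1 \<mu>2 U"
    and "\<forall>x \<in> UNIV - U. \<phi>1 x \<le> \<phi>2 x"
  shows "\<forall>x. \<phi>1 x \<le> \<phi>2 x"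
proof -
  interpret compact_cost c
    using assms(1-3) by unfold_locales
  have le_outside: "\<And>x. x \<notin> U \<Longrightarrow> \<phi>1 x \<le> \<phi>2 x"
    using assms(16) by blast
  note min_max = kantorovich_potentials_min_max[OF assms(4-11) assms(13,15) le_outside]
  obtain x0 where "x0 \<notin> U"
    using assms(14) by blast
  with le_outside have "\<phi>1 x0 \<le> \<phi>2 x0" .
  from assms(12) show ?thesis
  proof
    assume "kantorovich_potentials c \<mu>1 \<nu> = {(\<lambda>x. \<phi>1 x + C) | C. True}"
    then obtain C where C: "\<And>x. min (\<phi>1 x) (\<phi>2 x) = \<phi>1 x + C"
      using min_max(1) by (auto simp: fun_eq_iff)
    from C[of x0] \<open>\<phi>1 x0 \<le> \<phi>2 x0\<close> have "C = 0" by (simp add: min_def)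
    with C show ?thesis by (metis add_0_right min.absorb_iff1)
  next
    assume "kantorovich_potentials c \<mu>2 \<nu> = {(\<lambda>x. \<phi>2 x + C) | C. True}"
    then obtain C where C: "\<And>x. max (\<phi>1 x) (\<phi>2 x) = \<phi>2 x + C"
      using min_max(2) by (auto simp: fun_eq_iff)
    from C[of x0] \<open>\<phi>1 x0 \<le> \<phi>2 x0\<close> have "C = 0" by (simp add: max_def)
    with C show ?thesis by (metis add_0_right max.absorb_iff2)
  qed
qed

end
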